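(* Let $k$ be an algebraically closed field of characteristic zero, $f\in k[[\mathbf x]][z]$, $\mathbf x=(x_1,\dots,x_d)$, and let $\Gamma$ be a compact $1$-dimensional face of the Newton diagram of $f$ which does not meet the hyperplane $\{z=0\}$, with face polynomial $$f_\Gamma=a_\Gamma\,\mathbf x^{\mathbf n}z^{e}\prod_{j=1}^{r}(z^{p}-\mu_j\mathbf x^{\mathbf q})^{m_j},$$ where $e\ge1$, $\gcd(\mathbf q,p)=1$, $\mu_j\in k^*$ pairwise distinct, $a_\Gamma\in k^*$. Then the Newton diagram of $f_z=\partial f/\partial z$ has a face $\Gamma'$ parallel to $\Gamma$ with $$(f_z)_{\Gamma'}=a_\Gamma\mathbf x^{\mathbf n}z^{e-1}\Big(\prod_{j=1}^r(z^p-\mu_j\mathbf x^{\mathbf q})^{m_j-1}\Big)\Big(e\prod_{j=1}^r(z^p-\mu_j\mathbf x^{\mathbf q})+p\,z^{p}\sum_{i=1}^r m_i\prod_{j\neq i}(z^p-\mu_j\mathbf x^{\mathbf q})\Big).$$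
   Context: The Newton diagram of $h=\sum c_{\alpha,\beta}\mathbf x^\alpha z^\beta$ is the convex hull of $\operatorname{supp}(h)+\mathbb R^{d+1}_{\ge0}$; for a compact face $\gamma$, $h_\gamma$ is the sum of the terms of $h$ whose exponents lie on $\gamma$. *)

theory Defs
  imports "HOL-Analysis.Analysis" "HOL-Computational_Algebra.Polynomial"
begin

definition alg_closed_type :: "'a::field itself \<Rightarrow> bool" where
  "alg_closed_type _ \<longleftrightarrow> (\<forall>P :: 'a poly. degree P \<ge> 1 \<longrightarrow> (\<exists>x. poly P x = 0))"

text \<open>An element h of k[[x]][z] (x = (x_i), i ranging over the finite index type 'n) is
  represented by its coefficient function: h alpha beta is the coefficient of x^alpha z^beta.
  Membership in k[[x]][z] means: bounded z-degree.\<close>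
definition is_pspoly_z :: "(('n::finite \<Rightarrow> nat) \<Rightarrow> nat \<Rightarrow> 'a::zero) \<Rightarrow> bool" where
  "is_pspoly_z h \<longleftrightarrow> (\<exists>N. \<forall>\<alpha> \<beta>. N < \<beta> \<longrightarrow> h \<alpha> \<beta> = 0)"

definition dz :: "(('n::finite \<Rightarrow> nat) \<Rightarrow> nat \<Rightarrow> 'a::semiring_1) \<Rightarrow> ('n \<Rightarrow> nat) \<Rightarrow> nat \<Rightarrow> 'a" where
  "dz h \<alpha> \<beta> = of_nat (Suc \<beta>) * h \<alpha> (Suc \<beta>)"

text \<open>The exponent (alpha, beta) as a point of R^(d+1); coordinate None is the z-coordinate.\<close>
definition expt_pt :: "('n::finite \<Rightarrow> nat) \<Rightarrow> nat \<Rightarrow> real ^ ('n option)" where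
  "expt_pt \<alpha> \<beta> = (\<chi> i. case i of None \<Rightarrow> real \<beta> | Some j \<Rightarrow> real (\<alpha> j))"

definition supp_pts :: "(('n::finite \<Rightarrow> nat) \<Rightarrow> nat \<Rightarrow> 'a::zero) \<Rightarrow> (real ^ ('n option)) set" where
  "supp_pts h = {expt_pt \<alpha> \<beta> | \<alpha> \<beta>. h \<alpha> \<beta> \<noteq> 0}"

definition newton_diagram :: "(('n::finite \<Rightarrow> nat) \<Rightarrow> nat \<Rightarrow> 'a::zero) \<Rightarrow> (real ^ ('n option)) set" where
  "newton_diagram h = convex hull {u + v | u v. u \<in> supp_pts h \<and> (\<forall>i. 0 \<le> v $ i)}"

definition face_poly :: "(('n::finite \<Rightarrow> nat) \<Rightarrow> nat \<Rightarrow> 'a::zero) \<Rightarrow> (real ^ ('n option)) set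
    \<Rightarrow> ('n \<Rightarrow> nat) \<Rightarrow> nat \<Rightarrow> 'a" where
  "face_poly h \<gamma> \<alpha> \<beta> = (if expt_pt \<alpha> \<beta> \<in> \<gamma> then h \<alpha> \<beta> else 0)"

definition mono :: "('n::finite \<Rightarrow> 'a::comm_semiring_1) \<Rightarrow> ('n \<Rightarrow> nat) \<Rightarrow> 'a" where
  "mono x \<alpha> = (\<Prod>i\<in>UNIV. x i ^ \<alpha> i)"

definition peval :: "(('n::finite \<Rightarrow> nat) \<Rightarrow> nat \<Rightarrow> 'a::comm_semiring_1) \<Rightarrow> ('n \<Rightarrow> 'a) \<Rightarrow> 'a \<Rightarrow> 'a" where
  "peval c x z = (\<Sum>(\<alpha>, \<beta>) \<in> {(\<alpha>, \<beta>). c \<alpha> \<beta> \<noteq> 0}. c \<alpha> \<beta> * mono x \<alpha> * z ^ \<beta>)"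

definition finite_supp :: "(('n::finite \<Rightarrow> nat) \<Rightarrow> nat \<Rightarrow> 'a::zero) \<Rightarrow> bool" where
  "finite_supp c \<longleftrightarrow> finite {(\<alpha>, \<beta>). c \<alpha> \<beta> \<noteq> 0}"

end

theory Submission
  imports Defs
begin

text \<open>A compact face \<open>\<Gamma>\<close> of the Newton diagram of \<open>f\<close> is the convex hull of the exponents of
  \<open>f\<close> lying on it, since a face containing a point \<open>u + v\<close> with \<open>v \<noteq> 0\<close> in the orthant would
  contain the whole ray \<open>u + t v\<close>. If \<open>\<Gamma>\<close> avoids \<open>{z = 0}\<close>, differentiating in \<open>z\<close> moves these
  exponents down by the unit vector \<open>e\<^sub>z\<close>, and the diagram of \<open>f\<^sub>z\<close> translated by \<open>e\<^sub>z\<close> lies inside that of \<open>f\<close>;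
  hence \<open>\<Gamma> - e\<^sub>z\<close> is a face of the diagram of \<open>f\<^sub>z\<close>, with face polynomial \<open>\<partial>\<^sub>z f\<^sub>\<Gamma>\<close>. The formula is
  then the product rule applied to the factorization of \<open>f\<^sub>\<Gamma>\<close>.\<close>

lemma face_of_convex_hull_subset_hull_Int:
  fixes W :: "'a::euclidean_space set"
  assumes F: "F face_of convex hull W"
  shows "F \<subseteq> convex hull (W \<inter> F)"
proof
  fix x assume x: "x \<in> F"
  then obtain K where K: "finite K" "K \<subseteq> W" "x \<in> convex hull K"
    using face_of_imp_subset[OF F] caratheodory[of W] by blast
  have "convex hull W \<inter> convex hull K = convex hull K"
    using K(2) hull_mono by blast
  then have "F \<inter> convex hull K face_of convex hull K"
    using face_of_slice[OF F convex_convex_hull[of K]] by simp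
  then obtain K' where K': "K' \<subseteq> K" "F \<inter> convex hull K = convex hull K'"
    using face_of_convex_hull_subset finite_imp_compact[OF K(1)] by metis
  then have "K' \<subseteq> W \<inter> F"
    using K(2) hull_subset[of K' convex] by blast
  then show "x \<in> convex hull (W \<inter> F)"
    using x K(3) K'(2) hull_mono by blast
qed

definition orthant_hull :: "(real ^ 'i::finite) set \<Rightarrow> (real ^ 'i) set" where
  "orthant_hull S = convex hull {u + v | u v. u \<in> S \<and> (\<forall>i. 0 \<le> v $ i)}"

lemma newton_diagram_eq_orthant_hull: "newton_diagram h = orthant_hull (supp_pts h)"
  by (simp add: newton_diagram_def orthant_hull_def)

lemma convex_hull_subset_orthant_hull: "convex hull S \<subseteq> orthant_hull S"
  unfolding orthant_hull_def by (rule hull_mono) (force intro: exI[of _ 0])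

lemma orthant_hull_mono: "S \<subseteq> T \<Longrightarrow> orthant_hull S \<subseteq> orthant_hull T"
  unfolding orthant_hull_def by (rule hull_mono) blast

lemma orthant_hull_translation: "orthant_hull ((+) a ` S) = (+) a ` orthant_hull S"
proof -
  have "{u + v | u v. u \<in> (+) a ` S \<and> (\<forall>i. 0 \<le> v $ i)}
      = (+) a ` {u + v | u v. u \<in> S \<and> (\<forall>i. 0 \<le> v $ i)}"
    by (auto simp: image_iff) (metis add.assoc)+
  then show ?thesis
    unfolding orthant_hull_def by (simp add: convex_hull_translation)
qed

lemma bounded_face_of_orthant_hull:
  assumes G: "G face_of orthant_hull S" and "bounded G"
  shows "G \<subseteq> convex hull (S \<inter> G)"
proof -
  define W where "W = {u + v | u v. u \<in> S \<and> (\<forall>i. 0 \<le> v $ i)}"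
  have "W \<inter> G \<subseteq> S"
  proof
    fix x assume x: "x \<in> W \<inter> G"
    then obtain u v where x_eq: "x = u + v" and u: "u \<in> S" and v: "\<forall>i. 0 \<le> v $ i"
      unfolding W_def by blast
    obtain B where B: "\<forall>y\<in>G. norm y \<le> B"
      using \<open>bounded G\<close> unfolding bounded_iff by blast
    have "v = 0"
    proof (rule ccontr)
      assume "v \<noteq> 0"
      define t where "t = (B + norm u) / norm v + 2"
      have "0 \<le> B" using B x norm_ge_zero order_trans by blast
      have nv: "0 < norm v" using \<open>v \<noteq> 0\<close> by simp
      have "0 \<le> (B + norm u) / norm v"
        using \<open>0 \<le> B\<close> nv by simp
      then have t: "t > 1" by (simp add: t_def)
      have tv: "t * norm v = B + norm u + 2 * norm v"
        using nv unfolding t_def by (simp add: field_simps)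
      have "u \<in> W" "u + t *\<^sub>R v \<in> W"
        unfolding W_def using u v t by (force intro: exI[of _ 0], force)
      then have ends: "u \<in> orthant_hull S" "u + t *\<^sub>R v \<in> orthant_hull S"
        unfolding orthant_hull_def W_def by (simp_all add: hull_inc)
      have "x \<in> open_segment u (u + t *\<^sub>R v)"
        unfolding in_segment
        by (intro conjI exI[of _ "1 / t"]) (use t \<open>v \<noteq> 0\<close> x_eq in \<open>auto simp: algebra_simps\<close>)
      then have "u + t *\<^sub>R v \<in> G"
        using face_ofD[OF G _ ends] x by blast
      then have "norm (u + t *\<^sub>R v) \<le> B"
        using B by blast
      moreover have "t * norm v - norm u \<le> norm (u + t *\<^sub>R v)"
        using norm_triangle_ineq2[of "t *\<^sub>R v" "- u"] t by (simp add: add.commute)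
      ultimately show False
        using nv tv by linarith
    qed
    then show "x \<in> S" using x_eq u by simp
  qed
  have "G \<subseteq> convex hull (W \<inter> G)"
    using face_of_convex_hull_subset_hull_Int G unfolding orthant_hull_def W_def by blast
  also have "\<dots> \<subseteq> convex hull (S \<inter> G)"
    using \<open>W \<inter> G \<subseteq> S\<close> by (intro hull_mono) blast
  finally show ?thesis .
qed

lemma dz_eq_0_iff [simp]:
  fixes h :: "('n::finite \<Rightarrow> nat) \<Rightarrow> nat \<Rightarrow> 'a::{semiring_char_0, semiring_no_zero_divisors}"
  shows "dz h \<alpha> \<beta> = 0 \<longleftrightarrow> h \<alpha> (Suc \<beta>) = 0"
  by (simp add: dz_def del: of_nat_Suc)

lemma expt_pt_Suc: "expt_pt \<alpha> (Suc \<beta>) = axis None 1 + expt_pt \<alpha> \<beta>"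
  by (simp add: vec_eq_iff expt_pt_def axis_def split: option.split)

lemma supp_pts_dz:
  fixes h :: "('n::finite \<Rightarrow> nat) \<Rightarrow> nat \<Rightarrow> 'a::{semiring_char_0, semiring_no_zero_divisors}"
  shows "(+) (axis None 1) ` supp_pts (dz h) = supp_pts h \<inter> {v. v $ None \<noteq> 0}"
proof (intro set_eqI iffI)
  fix s assume "s \<in> (+) (axis None 1) ` supp_pts (dz h)"
  then show "s \<in> supp_pts h \<inter> {v. v $ None \<noteq> 0}"
    by (auto simp: supp_pts_def expt_pt_Suc[symmetric]) (auto simp: expt_pt_def)
next
  fix s assume "s \<in> supp_pts h \<inter> {v. v $ None \<noteq> 0}"
  then obtain \<alpha> \<beta> where "s = expt_pt \<alpha> (Suc \<beta>)" "h \<alpha> (Suc \<beta>) \<noteq> 0"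
    by (auto simp: supp_pts_def expt_pt_def gr0_conv_Suc)
  then show "s \<in> (+) (axis None 1) ` supp_pts (dz h)"
    by (auto simp: supp_pts_def expt_pt_Suc)
qed

lemma face_of_newton_diagram_dz:
  fixes h :: "('n::finite \<Rightarrow> nat) \<Rightarrow> nat \<Rightarrow> 'a::{semiring_char_0, semiring_no_zero_divisors}"
  assumes G: "G face_of newton_diagram h" and "bounded G" and off: "\<forall>v\<in>G. v $ None \<noteq> 0"
  shows "(+) (- axis None 1) ` G face_of newton_diagram (dz h)"
proof -
  let ?e = "axis None 1 :: real ^ 'n option"
  have "G \<subseteq> convex hull (supp_pts h \<inter> G)"
    using bounded_face_of_orthant_hull G \<open>bounded G\<close>
    unfolding newton_diagram_eq_orthant_hull by blast
  also have "\<dots> \<subseteq> convex hull ((+) ?e ` supp_pts (dz h))"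
    using off by (intro hull_mono) (auto simp: supp_pts_dz)
  also have "\<dots> \<subseteq> (+) ?e ` newton_diagram (dz h)"
    unfolding newton_diagram_eq_orthant_hull orthant_hull_translation[symmetric]
    by (rule convex_hull_subset_orthant_hull)
  finally have "G \<subseteq> (+) ?e ` newton_diagram (dz h)" .
  moreover have "(+) ?e ` newton_diagram (dz h) \<subseteq> newton_diagram h"
    unfolding newton_diagram_eq_orthant_hull orthant_hull_translation[symmetric] supp_pts_dz
    by (intro orthant_hull_mono) blast
  ultimately have "G face_of (+) ?e ` newton_diagram (dz h)"
    using face_of_subset G by blast
  then have "(+) (- ?e) ` G face_of (+) (- ?e) ` (+) ?e ` newton_diagram (dz h)"
    by (simp only: face_of_translation_eq)
  then show ?thesis
    by (simp add: image_image)
qed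

lemma face_poly_dz_translation:
  fixes h :: "('n::finite \<Rightarrow> nat) \<Rightarrow> nat \<Rightarrow> 'a::semiring_1"
  shows "face_poly (dz h) ((+) (- axis None 1) ` G) = dz (face_poly h G)"
proof -
  have "expt_pt \<alpha> \<beta> \<in> (+) (- axis None 1) ` G \<longleftrightarrow> expt_pt \<alpha> (Suc \<beta>) \<in> G" for \<alpha> \<beta>
    by (auto simp: expt_pt_Suc image_iff algebra_simps)
  then show ?thesis
    by (simp add: fun_eq_iff face_poly_def dz_def)
qed

lemma finite_supp_dz:
  fixes h :: "('n::finite \<Rightarrow> nat) \<Rightarrow> nat \<Rightarrow> 'a::{semiring_char_0, semiring_no_zero_divisors}"
  assumes "finite_supp h"
  shows "finite_supp (dz h)"
proof -
  have "{(\<alpha>, \<beta>). dz h \<alpha> \<beta> \<noteq> 0} \<subseteq> (\<lambda>(\<alpha>, \<beta>). (\<alpha>, \<beta> - 1)) ` {(\<alpha>, \<beta>). h \<alpha> \<beta> \<noteq> 0}"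
    by (force simp: image_iff)
  then show ?thesis
    using assms finite_subset unfolding finite_supp_def by blast
qed

definition z_poly :: "(('n::finite \<Rightarrow> nat) \<Rightarrow> nat \<Rightarrow> 'a::comm_semiring_1) \<Rightarrow> ('n \<Rightarrow> 'a) \<Rightarrow> 'a poly" where
  "z_poly c x = (\<Sum>(\<alpha>, \<beta>) \<in> {(\<alpha>, \<beta>). c \<alpha> \<beta> \<noteq> 0}. monom (c \<alpha> \<beta> * mono x \<alpha>) \<beta>)"

lemma poly_z_poly: "poly (z_poly c x) z = peval c x z"
  by (simp add: z_poly_def peval_def poly_sum poly_monom case_prod_beta)

lemma pderiv_z_poly:
  fixes c :: "('n::finite \<Rightarrow> nat) \<Rightarrow> nat \<Rightarrow> 'a::{comm_semiring_1, semiring_char_0, semiring_no_zero_divisors}"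
  assumes "finite_supp c"
  shows "pderiv (z_poly c x) = z_poly (dz c) x"
proof -
  let ?A = "{(\<alpha>, \<beta>). c \<alpha> \<beta> \<noteq> 0}"
  let ?T = "\<lambda>(\<alpha>, \<beta>). monom (of_nat \<beta> * (c \<alpha> \<beta> * mono x \<alpha>)) (\<beta> - 1)"
  define shift :: "('n \<Rightarrow> nat) \<times> nat \<Rightarrow> ('n \<Rightarrow> nat) \<times> nat"
    where "shift = (\<lambda>(\<alpha>, \<beta>). (\<alpha>, Suc \<beta>))"
  have "pderiv (z_poly c x) = (\<Sum>pr\<in>?A. ?T pr)"
    unfolding z_poly_def higher_pderiv_sum[of 1, simplified] by (simp add: pderiv_monom case_prod_beta)
  also have "\<dots> = (\<Sum>pr\<in>shift ` {(\<alpha>, \<beta>). dz c \<alpha> \<beta> \<noteq> 0}. ?T pr)"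
  proof (rule sum.mono_neutral_right)
    show "finite ?A" using assms unfolding finite_supp_def .
    show "shift ` {(\<alpha>, \<beta>). dz c \<alpha> \<beta> \<noteq> 0} \<subseteq> ?A" by (auto simp: shift_def)
    show "\<forall>pr\<in>?A - shift ` {(\<alpha>, \<beta>). dz c \<alpha> \<beta> \<noteq> 0}. ?T pr = 0"
    proof
      fix pr assume pr: "pr \<in> ?A - shift ` {(\<alpha>, \<beta>). dz c \<alpha> \<beta> \<noteq> 0}"
      obtain \<alpha> \<beta> where pr_eq: "pr = (\<alpha>, \<beta>)" by fastforce
      have "\<beta> = 0"
      proof (cases \<beta>)
        case (Suc b)
        then have "pr = shift (\<alpha>, b)" "dz c \<alpha> b \<noteq> 0" using pr pr_eq by (auto simp: shift_def)
        then show ?thesis using pr by blast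
      qed
      then show "?T pr = 0" using pr_eq by simp
    qed
  qed
  also have "\<dots> = z_poly (dz c) x"
    unfolding z_poly_def
    by (subst sum.reindex) (auto simp: inj_on_def shift_def dz_def mult_ac intro!: sum.cong)
  finally show ?thesis .
qed

lemma prod_power_eq_prod_power_pred_mult:
  fixes f :: "'i \<Rightarrow> 'a::comm_monoid_mult"
  assumes "\<forall>j\<in>J. m j \<ge> 1"
  shows "(\<Prod>j\<in>J. f j ^ m j) = (\<Prod>j\<in>J. f j ^ (m j - 1)) * (\<Prod>j\<in>J. f j)"
proof -
  have "(\<Prod>j\<in>J. f j ^ m j) = (\<Prod>j\<in>J. f j ^ (m j - 1) * f j)"
  proof (rule prod.cong[OF refl])
    fix j assume "j \<in> J"
    then have "m j = Suc (m j - 1)" using assms by force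
    then show "f j ^ m j = f j ^ (m j - 1) * f j" by (metis power_Suc2)
  qed
  then show ?thesis by (simp add: prod.distrib)
qed

lemma pderiv_prod_power:
  fixes P :: "'i \<Rightarrow> 'a::idom poly"
  assumes "finite I" and m: "\<forall>j\<in>I. m j \<ge> 1"
  shows "pderiv (\<Prod>j\<in>I. P j ^ m j)
    = (\<Prod>j\<in>I. P j ^ (m j - 1)) * (\<Sum>i\<in>I. smult (of_nat (m i)) (pderiv (P i) * (\<Prod>j\<in>I - {i}. P j)))"
proof -
  have "(\<Prod>j\<in>I - {i}. P j ^ m j) * P i ^ (m i - 1) = (\<Prod>j\<in>I. P j ^ (m j - 1)) * (\<Prod>j\<in>I - {i}. P j)"
    if "i \<in> I" for i
    using prod.remove[OF \<open>finite I\<close> that, of "\<lambda>j. P j ^ (m j - 1)"] prod_power_eq_prod_power_pred_mult[of "I - {i}" m P] m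
    by (simp add: mult_ac)
  then show ?thesis
    unfolding pderiv_prod pderiv_power sum_distrib_left
    by (intro sum.cong) (simp_all add: mult_ac)
qed

lemma poly_pderiv_face_factorization:
  fixes c :: "'a::idom" and w :: "'i \<Rightarrow> 'a"
  assumes "finite I" and "e \<ge> 1" and "\<forall>j\<in>I. m j \<ge> 1"
  shows "poly (pderiv (smult c (monom 1 e * (\<Prod>j\<in>I. (monom 1 p - [:w j:]) ^ m j)))) z
    = c * z ^ (e - 1) * (\<Prod>j\<in>I. (z ^ p - w j) ^ (m j - 1))
      * (of_nat e * (\<Prod>j\<in>I. z ^ p - w j)
         + of_nat p * z ^ p * (\<Sum>i\<in>I. of_nat (m i) * (\<Prod>j\<in>I - {i}. z ^ p - w j)))"
proof -
  define g where "g j = z ^ p - w j" for j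
  have pderiv_factor: "pderiv (monom 1 p - [:w j:]) = monom (of_nat p) (p - 1)" for j
    by (simp add: pderiv_diff pderiv_monom)
  have z_powers: "z ^ e * z ^ (p - 1) = z ^ p * z ^ (e - 1)" if "p \<noteq> 0"
    using \<open>e \<ge> 1\<close> that by (simp add: add.commute flip: power_add)
  have "poly (pderiv (smult c (monom 1 e * (\<Prod>j\<in>I. (monom 1 p - [:w j:]) ^ m j)))) z
      = c * (z ^ e * ((\<Prod>j\<in>I. g j ^ (m j - 1))
               * (\<Sum>i\<in>I. of_nat (m i) * (of_nat p * z ^ (p - 1) * (\<Prod>j\<in>I - {i}. g j))))
             + (\<Prod>j\<in>I. g j ^ m j) * (of_nat e * z ^ (e - 1)))"
    by (simp add: pderiv_smult pderiv_mult pderiv_monom pderiv_prod_power[OF assms(1,3)]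
        pderiv_factor poly_prod poly_sum poly_monom g_def)
  also have "\<dots> = c * z ^ (e - 1) * (\<Prod>j\<in>I. g j ^ (m j - 1))
      * (of_nat e * (\<Prod>j\<in>I. g j) + of_nat p * z ^ p * (\<Sum>i\<in>I. of_nat (m i) * (\<Prod>j\<in>I - {i}. g j)))"
  proof -
    have "(\<Sum>i\<in>I. of_nat (m i) * (of_nat p * z ^ (p - 1) * (\<Prod>j\<in>I - {i}. g j)))
        = of_nat p * z ^ (p - 1) * (\<Sum>i\<in>I. of_nat (m i) * (\<Prod>j\<in>I - {i}. g j))"
      by (simp add: sum_distrib_left mult_ac)
    then show ?thesis
      unfolding prod_power_eq_prod_power_pred_mult[OF assms(3)]
      using z_powers by (cases "p = 0") (simp_all add: algebra_simps)
  qed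
  finally show ?thesis
    by (simp add: g_def)
qed

theorem lemma4p10:
  fixes f :: "('n::finite \<Rightarrow> nat) \<Rightarrow> nat \<Rightarrow> 'a::field_char_0"
    and \<Gamma> :: "(real ^ ('n option)) set"
    and a :: 'a and n q :: "'n \<Rightarrow> nat" and e p r :: nat
    and \<mu> :: "nat \<Rightarrow> 'a" and m :: "nat \<Rightarrow> nat"
  assumes "alg_closed_type TYPE('a)"
    and "is_pspoly_z f"
    and "\<Gamma> face_of newton_diagram f" and "compact \<Gamma>" and "aff_dim \<Gamma> = 1"
    and "\<forall>v\<in>\<Gamma>. v $ None \<noteq> 0"
    and "e \<ge> 1"
    and "\<forall>g::nat. g dvd p \<and> (\<forall>i. g dvd q i) \<longrightarrow> g = 1"
    and "\<forall>j\<in>{1..r}. \<mu> j \<noteq> 0"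
    and "inj_on \<mu> {1..r}"
    and "\<forall>j\<in>{1..r}. m j \<ge> 1"
    and "a \<noteq> 0"
    and "finite_supp (face_poly f \<Gamma>)"
    and "\<forall>x z. peval (face_poly f \<Gamma>) x z =
           a * mono x n * z ^ e * (\<Prod>j=1..r. (z ^ p - \<mu> j * mono x q) ^ m j)"
  shows "\<exists>\<Gamma>'. \<Gamma>' face_of newton_diagram (dz f) \<and> compact \<Gamma>' \<and> aff_dim \<Gamma>' = 1
          \<and> (\<exists>t. (\<lambda>v. v + t) ` (affine hull \<Gamma>) = affine hull \<Gamma>')
          \<and> finite_supp (face_poly (dz f) \<Gamma>')
          \<and> (\<forall>x z. peval (face_poly (dz f) \<Gamma>') x z =
               a * mono x n * z ^ (e - 1) * (\<Prod>j=1..r. (z ^ p - \<mu> j * mono x q) ^ (m j - 1))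
               * (of_nat e * (\<Prod>j=1..r. (z ^ p - \<mu> j * mono x q))
                  + of_nat p * z ^ p * (\<Sum>i=1..r. of_nat (m i) *
                       (\<Prod>j\<in>{1..r} - {i}. (z ^ p - \<mu> j * mono x q)))))"
proof -
  let ?e = "axis None 1 :: real ^ 'n option"
  define \<Gamma>' where "\<Gamma>' = (+) (- ?e) ` \<Gamma>"
  define c where "c = face_poly f \<Gamma>"
  have "\<Gamma>' face_of newton_diagram (dz f)"
    unfolding \<Gamma>'_def using face_of_newton_diagram_dz assms(3,4,6) compact_imp_bounded by blast
  moreover have "compact \<Gamma>'"
    unfolding \<Gamma>'_def using assms(4) by (rule compact_translation)
  moreover have "aff_dim \<Gamma>' = 1"
    unfolding \<Gamma>'_def using assms(5) by (simp only: aff_dim_translation_eq)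
  moreover have "(\<lambda>v. v + - ?e) ` (affine hull \<Gamma>) = affine hull \<Gamma>'"
    unfolding \<Gamma>'_def affine_hull_translation by (simp add: add.commute)
  moreover have "face_poly (dz f) \<Gamma>' = dz c"
    unfolding \<Gamma>'_def c_def by (rule face_poly_dz_translation)
  moreover have "peval (dz c) x z = poly (pderiv (z_poly c x)) z" for x z
    using assms(13) by (simp add: c_def poly_z_poly pderiv_z_poly)
  moreover have "z_poly c x
      = smult (a * mono x n) (monom 1 e * (\<Prod>j\<in>{1..r}. (monom 1 p - [:\<mu> j * mono x q:]) ^ m j))"
    for x
    using assms(14) by (intro poly_eq_poly_eq_iff[THEN iffD1] ext)
      (simp add: poly_z_poly c_def poly_prod poly_monom mult_ac)
  ultimately show ?thesis
    using assms(7,11,13)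
    by (intro exI[of _ \<Gamma>'] conjI exI[of _ "- ?e"] allI)
      (simp_all add: finite_supp_dz poly_pderiv_face_factorization c_def)
qed

end
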